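(* For every 3-periodic of the elliptic billiard, the interior angles $\theta_i'$ of its outer triangle satisfy $$\sum_{i=1}^3\cos(2\theta_i')=\frac{(a^2+b^2)(a^2+b^2-2\delta)}{c^4}=3-JL,\qquad \delta=\sqrt{a^4-a^2b^2+b^4}.$$
   Context: The elliptic billiard is $\mathcal{E}: x^2/a^2+y^2/b^2=1$, $a>b>0$, $c=\sqrt{a^2-b^2}$. A 3-periodic is a triangle $P_1P_2P_3$ inscribed in $\mathcal{E}$ that is a closed billiard trajectory (at each vertex the normal to $\mathcal{E}$ bisects the angle between the two incident sides). Its outer triangle has as sides the tangent lines to $\mathcal{E}$ at $P_1,P_2,P_3$. $L$ is the perimeter (the same for all 3-periodics), $J$ is Joachimsthal's constant $J=\frac12\nabla f(P_i)\cdot\hat v>0$ ($f=x^2/a^2+y^2/b^2$, $\hat v$ unit direction of the trajectory at $P_i$); explicitly $J=\sqrt{2\delta-a^2-b^2}/c^2$ and $L=2(\delta+a^2+b^2)J$. *)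

theory Defs
  imports Complex_Main
begin

type_synonym point = "real \<times> real"

definition vec_angle :: "point \<Rightarrow> point \<Rightarrow> real" where
  "vec_angle u v = arccos ((fst u * fst v + snd u * snd v) /
      (sqrt ((fst u)^2 + (snd u)^2) * sqrt ((fst v)^2 + (snd v)^2)))"

definition on_ellipse :: "real \<Rightarrow> real \<Rightarrow> point \<Rightarrow> bool" where
  "on_ellipse a b P \<longleftrightarrow> (fst P)^2 / a^2 + (snd P)^2 / b^2 = 1"

definition ell_normal :: "real \<Rightarrow> real \<Rightarrow> point \<Rightarrow> point" where
  "ell_normal a b P = (fst P / a^2, snd P / b^2)"

definition vsub :: "point \<Rightarrow> point \<Rightarrow> point" where
  "vsub Q P = (fst Q - fst P, snd Q - snd P)"

definition reflects_at :: "real \<Rightarrow> real \<Rightarrow> point \<Rightarrow> point \<Rightarrow> point \<Rightarrow> bool" where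
  "reflects_at a b Q P R \<longleftrightarrow>
     vec_angle (vsub Q P) (ell_normal a b P) = vec_angle (vsub R P) (ell_normal a b P)"

definition three_periodic :: "real \<Rightarrow> real \<Rightarrow> point \<Rightarrow> point \<Rightarrow> point \<Rightarrow> bool" where
  "three_periodic a b P1 P2 P3 \<longleftrightarrow>
     P1 \<noteq> P2 \<and> P2 \<noteq> P3 \<and> P3 \<noteq> P1 \<and>
     on_ellipse a b P1 \<and> on_ellipse a b P2 \<and> on_ellipse a b P3 \<and>
     reflects_at a b P3 P1 P2 \<and> reflects_at a b P1 P2 P3 \<and> reflects_at a b P2 P3 P1"

definition tangent_line :: "real \<Rightarrow> real \<Rightarrow> point \<Rightarrow> point set" where
  "tangent_line a b P = {X. fst X * fst P / a^2 + snd X * snd P / b^2 = 1}"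

definition outer_vertex :: "real \<Rightarrow> real \<Rightarrow> point \<Rightarrow> point \<Rightarrow> point" where
  "outer_vertex a b P Q = (THE X. X \<in> tangent_line a b P \<and> X \<in> tangent_line a b Q)"

definition delta_const :: "real \<Rightarrow> real \<Rightarrow> real" where
  "delta_const a b = sqrt (a^4 - a^2 * b^2 + b^4)"

definition joach_J :: "real \<Rightarrow> real \<Rightarrow> real" where
  "joach_J a b = sqrt (2 * delta_const a b - a^2 - b^2) / (a^2 - b^2)"

definition perim_L :: "real \<Rightarrow> real \<Rightarrow> real" where
  "perim_L a b = 2 * (delta_const a b + a^2 + b^2) * joach_J a b"

end

theory Submission
  imports Defs
begin

text \<open>Write \<open>P\<^sub>j = (a X\<^sub>j, b Y\<^sub>j)\<close> with \<open>(X\<^sub>j, Y\<^sub>j) = (cos t\<^sub>j, sin t\<^sub>j)\<close> and put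
  \<open>z\<^sub>j = X\<^sub>j + i Y\<^sub>j\<close>. The reflection law at a vertex equates, for the two chords through
  it, the ratio of \<open>1 - cos (t - t')\<close> to \<open>a\<^sup>2 + b\<^sup>2 - (a\<^sup>2 - b\<^sup>2) cos (t + t')\<close>; hence one
  constant \<open>k > 0\<close> serves all three chords. In the \<open>z\<^sub>j\<close> this says that every pair is a
  root of the symmetric biquadratic \<open>z\<^sup>2 + w\<^sup>2 - e z\<^sup>2w\<^sup>2 - 2Kzw - e\<close> with
  \<open>e = k (a\<^sup>2 - b\<^sup>2)\<close>, \<open>K = 1 - k (a\<^sup>2 + b\<^sup>2)\<close>, and three distinct roots force
  \<open>z\<^sub>1 + z\<^sub>2 + z\<^sub>3 = -e z\<^sub>1z\<^sub>2z\<^sub>3\<close>, \<open>z\<^sub>1z\<^sub>2 + z\<^sub>1z\<^sub>3 + z\<^sub>2z\<^sub>3 = -e\<close> and \<open>2K = e\<^sup>2 - 1\<close>, which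
  determines \<open>e\<close> from \<open>a\<close> and \<open>b\<close>. The sides of the outer triangle are perpendicular
  to the ellipse normals at the \<open>P\<^sub>j\<close>, so each \<open>cos 2\<theta>'\<close> is a rational function of two
  of the \<open>z\<^sub>j\<close>; modulo the relations above their sum is \<open>(e\<^sup>2 - 3)/2\<close>, which equals
  both closed forms.\<close>

lemma abs_dot_le_norm_mult:
  fixes u1 u2 v1 v2 :: real
  shows "\<bar>u1*v1 + u2*v2\<bar> \<le> sqrt (u1^2 + u2^2) * sqrt (v1^2 + v2^2)"
proof -
  have "(u1^2 + u2^2) * (v1^2 + v2^2) - (u1*v1 + u2*v2)^2 = (u1*v2 - u2*v1)^2" by algebra
  then have "(u1*v1 + u2*v2)^2 \<le> (u1^2 + u2^2) * (v1^2 + v2^2)"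
    using zero_le_power2[of "u1*v2 - u2*v1"] by linarith
  then show ?thesis
    by (metis real_sqrt_abs real_sqrt_le_mono real_sqrt_mult)
qed

lemma cos_vec_angle:
  "cos (vec_angle u v) = (fst u * fst v + snd u * snd v) /
      (sqrt ((fst u)^2 + (snd u)^2) * sqrt ((fst v)^2 + (snd v)^2))"
proof -
  define d where "d = sqrt ((fst u)^2 + (snd u)^2) * sqrt ((fst v)^2 + (snd v)^2)"
  define t where "t = fst u * fst v + snd u * snd v"
  have le: "\<bar>t\<bar> \<le> d" unfolding t_def d_def by (rule abs_dot_le_norm_mult)
  then have "\<bar>t / d\<bar> \<le> 1"
    by (cases "d = 0") (auto simp: abs_divide divide_le_eq)
  then show ?thesis unfolding vec_angle_def t_def d_def by (simp add: cos_arccos_abs)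
qed

lemma cos_double_vec_angle:
  "cos (2 * vec_angle u v) = 2 * ((fst u * fst v + snd u * snd v)^2 /
      (((fst u)^2 + (snd u)^2) * ((fst v)^2 + (snd v)^2))) - 1"
  unfolding cos_double_cos cos_vec_angle by (simp add: power_divide power_mult_distrib)

text \<open>Doubling the angle makes it an angle between lines, and rotating both lines
  by a right angle does not change it.\<close>
lemma cos_double_vec_angle_orthogonal:
  assumes "fst p * fst v + snd p * snd v = 0" "fst q * fst w + snd q * snd w = 0"
    and "p \<noteq> (0, 0)" "q \<noteq> (0, 0)" "v \<noteq> (0, 0)" "w \<noteq> (0, 0)"
  shows "cos (2 * vec_angle v w) = cos (2 * vec_angle p q)"
proof -
  obtain p1 p2 q1 q2 v1 v2 w1 w2 where
    pqvw: "p = (p1, p2)" "q = (q1, q2)" "v = (v1, v2)" "w = (w1, w2)"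
    by (cases p, cases q, cases v, cases w) auto
  have orth: "p1*v1 + p2*v2 = 0" "q1*w1 + q2*w2 = 0" using assms(1,2) pqvw by auto
  have nz: "p1^2 + p2^2 \<noteq> 0" "q1^2 + q2^2 \<noteq> 0" "v1^2 + v2^2 \<noteq> 0" "w1^2 + w2^2 \<noteq> 0"
    using assms(3-6) pqvw by (auto simp: sum_power2_eq_zero_iff)
  have "(p1^2 + p2^2) * (q1^2 + q2^2) * ((v1*w1 + v2*w2)^2 * ((p1^2 + p2^2) * (q1^2 + q2^2)))
      = (p1^2 + p2^2) * (q1^2 + q2^2) * ((p1*q1 + p2*q2)^2 * ((v1^2 + v2^2) * (w1^2 + w2^2)))"
    using orth by algebra
  then have "(v1*w1 + v2*w2)^2 * ((p1^2 + p2^2) * (q1^2 + q2^2))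
      = (p1*q1 + p2*q2)^2 * ((v1^2 + v2^2) * (w1^2 + w2^2))"
    using nz(1,2) mult_left_cancel[of "(p1^2 + p2^2) * (q1^2 + q2^2)"] by simp
  then show ?thesis
    unfolding cos_double_vec_angle pqvw using nz by (simp add: frac_eq_eq)
qed

lemma on_ellipse_scaled_iff:
  assumes "a \<noteq> 0" "b \<noteq> 0"
  shows "on_ellipse a b (a*X, b*Y) \<longleftrightarrow> X^2 + Y^2 = 1"
  using assms by (simp add: on_ellipse_def power_mult_distrib)

text \<open>For \<open>(X, Y) = (cos t, sin t)\<close> and \<open>(X', Y') = (cos t', sin t')\<close> these are
  \<open>1 - cos (t - t')\<close> and \<open>a\<^sup>2 + b\<^sup>2 - (a\<^sup>2 - b\<^sup>2) cos (t + t')\<close>; their product is the squared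
  length of the chord between the corresponding points of the ellipse.\<close>
definition unit_gap :: "real \<Rightarrow> real \<Rightarrow> real \<Rightarrow> real \<Rightarrow> real" where
  "unit_gap X Y X' Y' = 1 - X*X' - Y*Y'"

definition chord_weight :: "real \<Rightarrow> real \<Rightarrow> real \<Rightarrow> real \<Rightarrow> real \<Rightarrow> real \<Rightarrow> real" where
  "chord_weight a b X Y X' Y' = (a^2 + b^2) - (a^2 - b^2) * (X*X' - Y*Y')"

lemma unit_gap_commute: "unit_gap X Y X' Y' = unit_gap X' Y' X Y"
  unfolding unit_gap_def by (simp add: algebra_simps)

lemma chord_weight_commute: "chord_weight a b X Y X' Y' = chord_weight a b X' Y' X Y"
  unfolding chord_weight_def by (simp add: algebra_simps)

lemma unit_gap_pos:
  assumes "X^2 + Y^2 = 1" "X'^2 + Y'^2 = 1" "(X, Y) \<noteq> (X', Y')"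
  shows "unit_gap X Y X' Y' > 0"
proof -
  have "2 * unit_gap X Y X' Y' = (X - X')^2 + (Y - Y')^2"
    using assms(1,2) unfolding unit_gap_def by algebra
  moreover have "(X - X')^2 + (Y - Y')^2 > 0"
    using assms(3) by (simp add: sum_power2_gt_zero_iff)
  ultimately show ?thesis by linarith
qed

lemma chord_weight_pos:
  assumes "a > b" "b > 0" "X^2 + Y^2 = 1" "X'^2 + Y'^2 = 1"
  shows "chord_weight a b X Y X' Y' > 0"
proof -
  have "2 - 2 * (X*X' - Y*Y') = (X - X')^2 + (Y + Y')^2" using assms(3,4) by algebra
  moreover have "0 \<le> (X - X')^2 + (Y + Y')^2" by simp
  ultimately have "X*X' - Y*Y' \<le> 1" by (smt (verit))
  moreover have "a^2 - b^2 \<ge> 0" using assms(1,2) by (simp add: power_mono)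
  ultimately have "(a^2 - b^2) * (X*X' - Y*Y') \<le> a^2 - b^2"
    using mult_left_mono by fastforce
  then show ?thesis unfolding chord_weight_def using assms(2) by (smt (verit) zero_less_power)
qed

lemma chord_length_sq:
  assumes "X^2 + Y^2 = 1" "X'^2 + Y'^2 = 1"
  shows "(a*X' - a*X)^2 + (b*Y' - b*Y)^2 = unit_gap X Y X' Y' * chord_weight a b X Y X' Y'"
  using assms unfolding unit_gap_def chord_weight_def by algebra

lemma ell_normal_scaled_pos:
  fixes a b X Y :: real
  assumes "a \<noteq> 0" "b \<noteq> 0" "X^2 + Y^2 = 1"
  shows "(X/a)^2 + (Y/b)^2 > 0"
proof -
  have "X \<noteq> 0 \<or> Y \<noteq> 0" using assms(3) by (cases "X = 0") auto
  then show ?thesis using assms(1,2) by (auto simp: sum_power2_gt_zero_iff)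
qed

lemma scaled_normal_sq_pos:
  fixes a b X Y :: real
  assumes "a > 0" "b > 0" "X^2 + Y^2 = 1"
  shows "b^2*X*X + a^2*Y*Y > 0"
proof -
  have "b*X \<noteq> 0 \<or> a*Y \<noteq> 0" using assms by (cases "X = 0") auto
  then have "(b*X)^2 + (a*Y)^2 > 0" by (simp add: sum_power2_gt_zero_iff)
  then show ?thesis by (simp add: power2_eq_square mult.assoc mult.left_commute)
qed

lemma cos_angle_chord_normal:
  assumes "a > 0" "b > 0" "X^2 + Y^2 = 1" "X'^2 + Y'^2 = 1"
    and gap: "unit_gap X Y X' Y' > 0" and weight: "chord_weight a b X Y X' Y' > 0"
  shows "cos (vec_angle (vsub (a*X', b*Y') (a*X, b*Y)) (ell_normal a b (a*X, b*Y)))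
     = - sqrt (unit_gap X Y X' Y' / chord_weight a b X Y X' Y') / sqrt ((X/a)^2 + (Y/b)^2)"
proof -
  define m where "m = unit_gap X Y X' Y'"
  define D where "D = chord_weight a b X Y X' Y'"
  have dot: "(a*X' - a*X) * (a*X/a^2) + (b*Y' - b*Y) * (b*Y/b^2) = - m"
  proof -
    have "(a*X' - a*X) * (a*X/a^2) + (b*Y' - b*Y) * (b*Y/b^2) = (X' - X)*X + (Y' - Y)*Y"
      using assms(1,2) by (simp add: power2_eq_square field_simps)
    also have "\<dots> = - m" unfolding m_def unit_gap_def using assms(3) by algebra
    finally show ?thesis .
  qed
  have normal: "(a*X/a^2)^2 + (b*Y/b^2)^2 = (X/a)^2 + (Y/b)^2"
    using assms(1,2) by (simp add: power2_eq_square field_simps)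
  have "m / sqrt (m*D) = (m / sqrt m) / sqrt D" by (simp add: real_sqrt_mult)
  also have "\<dots> = sqrt (m/D)" using gap by (simp add: m_def real_div_sqrt real_sqrt_divide)
  finally have "m / sqrt (m*D) = sqrt (m/D)" .
  moreover have "cos (vec_angle (vsub (a*X', b*Y') (a*X, b*Y)) (ell_normal a b (a*X, b*Y)))
      = - (m / sqrt (m*D)) / sqrt ((X/a)^2 + (Y/b)^2)"
    unfolding cos_vec_angle vsub_def ell_normal_def m_def D_def
    using dot normal chord_length_sq[OF assms(3,4)] by (simp add: m_def)
  ultimately show ?thesis unfolding m_def D_def by simp
qed

lemma reflects_at_gap_ratio_eq:
  assumes ab: "a > b" "b > 0"
    and unit: "X^2 + Y^2 = 1" "X'^2 + Y'^2 = 1" "X''^2 + Y''^2 = 1"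
    and distinct: "(X', Y') \<noteq> (X, Y)" "(X'', Y'') \<noteq> (X, Y)"
    and "reflects_at a b (a*X', b*Y') (a*X, b*Y) (a*X'', b*Y'')"
  shows "unit_gap X Y X' Y' / chord_weight a b X Y X' Y'
       = unit_gap X Y X'' Y'' / chord_weight a b X Y X'' Y''"
proof -
  have "sqrt ((X/a)^2 + (Y/b)^2) > 0"
    using ell_normal_scaled_pos[of a b, OF _ _ unit(1)] ab by (intro real_sqrt_gt_zero) simp
  then have "sqrt ((X/a)^2 + (Y/b)^2) \<noteq> 0" by linarith
  moreover have "- sqrt (unit_gap X Y X' Y' / chord_weight a b X Y X' Y') / sqrt ((X/a)^2 + (Y/b)^2)
      = - sqrt (unit_gap X Y X'' Y'' / chord_weight a b X Y X'' Y'') / sqrt ((X/a)^2 + (Y/b)^2)"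
    using assms(8) ab unit distinct unfolding reflects_at_def
    by (subst (1 2) cos_angle_chord_normal[symmetric]) (auto intro: unit_gap_pos chord_weight_pos)
  ultimately show ?thesis by (metis divide_cancel_right neg_equal_iff_equal real_sqrt_eq_iff)
qed

lemma three_periodic_common_ratio:
  assumes ab: "a > b" "b > 0" and "three_periodic a b P1 P2 P3"
  obtains X1 Y1 X2 Y2 X3 Y3 k :: real where
    "P1 = (a*X1, b*Y1)" "P2 = (a*X2, b*Y2)" "P3 = (a*X3, b*Y3)"
    "X1^2 + Y1^2 = 1" "X2^2 + Y2^2 = 1" "X3^2 + Y3^2 = 1"
    "(X1, Y1) \<noteq> (X2, Y2)" "(X2, Y2) \<noteq> (X3, Y3)" "(X3, Y3) \<noteq> (X1, Y1)"
    "k > 0"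
    "unit_gap X1 Y1 X2 Y2 = k * chord_weight a b X1 Y1 X2 Y2"
    "unit_gap X2 Y2 X3 Y3 = k * chord_weight a b X2 Y2 X3 Y3"
    "unit_gap X3 Y3 X1 Y1 = k * chord_weight a b X3 Y3 X1 Y1"
proof -
  have nz: "a \<noteq> 0" "b \<noteq> 0" using ab by auto
  define X1 X2 X3 where "X1 = fst P1 / a" "X2 = fst P2 / a" "X3 = fst P3 / a"
  define Y1 Y2 Y3 where "Y1 = snd P1 / b" "Y2 = snd P2 / b" "Y3 = snd P3 / b"
  have P: "P1 = (a*X1, b*Y1)" "P2 = (a*X2, b*Y2)" "P3 = (a*X3, b*Y3)"
    unfolding X1_X2_X3_def Y1_Y2_Y3_def using nz by simp_all
  note tp = assms(3)[unfolded three_periodic_def P]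
  have unit: "X1^2 + Y1^2 = 1" "X2^2 + Y2^2 = 1" "X3^2 + Y3^2 = 1"
    using tp on_ellipse_scaled_iff[OF nz] by auto
  have distinct: "(X1, Y1) \<noteq> (X2, Y2)" "(X2, Y2) \<noteq> (X3, Y3)" "(X3, Y3) \<noteq> (X1, Y1)"
    using tp by auto
  define k where "k = unit_gap X1 Y1 X2 Y2 / chord_weight a b X1 Y1 X2 Y2"
  have ratio13: "k = unit_gap X1 Y1 X3 Y3 / chord_weight a b X1 Y1 X3 Y3"
    using reflects_at_gap_ratio_eq[OF ab unit(1,3,2)] tp distinct unfolding k_def by auto
  have ratio23: "k = unit_gap X2 Y2 X3 Y3 / chord_weight a b X2 Y2 X3 Y3"
    using reflects_at_gap_ratio_eq[OF ab unit(2,1,3)] tp distinct unfolding k_def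
    by (auto simp: unit_gap_commute chord_weight_commute)
  have weight: "chord_weight a b X1 Y1 X2 Y2 > 0" "chord_weight a b X2 Y2 X3 Y3 > 0"
    "chord_weight a b X3 Y3 X1 Y1 > 0"
    using chord_weight_pos[OF ab] unit by auto
  show thesis
  proof (rule that[OF P unit distinct])
    show "k > 0" unfolding k_def using unit_gap_pos[OF unit(1,2) distinct(1)] weight by simp
    show "unit_gap X1 Y1 X2 Y2 = k * chord_weight a b X1 Y1 X2 Y2"
      unfolding k_def using weight by simp
    show "unit_gap X2 Y2 X3 Y3 = k * chord_weight a b X2 Y2 X3 Y3"
      unfolding ratio23 using weight by simp
    show "unit_gap X3 Y3 X1 Y1 = k * chord_weight a b X3 Y3 X1 Y1"
      unfolding ratio13 using weight by (simp add: unit_gap_commute chord_weight_commute)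
  qed
qed

text \<open>For \<open>z = X + iY\<close>, \<open>w = X' + iY'\<close> on the unit circle the relation
  \<open>unit_gap = k * chord_weight\<close> becomes \<open>chord_poly e K z w = 0\<close> with
  \<open>e = k (a\<^sup>2 - b\<^sup>2)\<close> and \<open>K = 1 - k (a\<^sup>2 + b\<^sup>2)\<close>.\<close>
definition chord_poly :: "'a::comm_ring_1 \<Rightarrow> 'a \<Rightarrow> 'a \<Rightarrow> 'a \<Rightarrow> 'a" where
  "chord_poly e K z w = z^2 + w^2 - e*z^2*w^2 - 2*K*z*w - e"

lemma chord_poly_commute: "chord_poly e K z w = chord_poly e K w z"
  unfolding chord_poly_def by (simp add: algebra_simps)

lemma chord_poly_Complex:
  fixes a b k X Y X' Y' :: real
  assumes "X^2 + Y^2 = 1" "X'^2 + Y'^2 = 1"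
    and "unit_gap X Y X' Y' = k * chord_weight a b X Y X' Y'"
  shows "chord_poly (of_real (k * (a^2 - b^2))) (of_real (1 - k * (a^2 + b^2)))
           (Complex X Y) (Complex X' Y') = 0"
proof -
  have "(of_real X)^2 + (of_real Y)^2 = (1::complex)" "(of_real X')^2 + (of_real Y')^2 = (1::complex)"
    using arg_cong[OF assms(1), of complex_of_real] arg_cong[OF assms(2), of complex_of_real]
    by simp_all
  moreover have "1 - of_real X * of_real X' - of_real Y * of_real Y' = (of_real k :: complex) *
       ((of_real a)^2 + (of_real b)^2 - ((of_real a)^2 - (of_real b)^2) *
         (of_real X * of_real X' - of_real Y * of_real Y'))"
    using arg_cong[OF assms(3), of complex_of_real] unfolding unit_gap_def chord_weight_def
    by (simp only: of_real_diff of_real_mult of_real_add of_real_power of_real_1)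
  moreover have "\<i>^2 = (-1::complex)" by simp
  ultimately show ?thesis
    unfolding chord_poly_def Complex_eq of_real_mult of_real_diff of_real_add of_real_power of_real_1
    by algebra
qed

lemma monic_cubic_vieta:
  fixes z1 z2 z3 p r c :: "'a::idom"
  assumes "z1^3 + p*z1^2 + r*z1 + c = 0" "z2^3 + p*z2^2 + r*z2 + c = 0"
    "z3^3 + p*z3^2 + r*z3 + c = 0"
    and "z1 \<noteq> z2" "z1 \<noteq> z3" "z2 \<noteq> z3"
  shows "z1 + z2 + z3 = - p" "z1*z2 + z1*z3 + z2*z3 = r"
proof -
  have "(z1 - z2) * (z1^2 + z1*z2 + z2^2 + p*(z1 + z2) + r) = 0" using assms(1,2) by algebra
  then have T12: "z1^2 + z1*z2 + z2^2 + p*(z1 + z2) + r = 0" using assms(4) by simp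
  have "(z1 - z3) * (z1^2 + z1*z3 + z3^2 + p*(z1 + z3) + r) = 0" using assms(1,3) by algebra
  then have T13: "z1^2 + z1*z3 + z3^2 + p*(z1 + z3) + r = 0" using assms(5) by simp
  have "(z2 - z3) * (z1 + z2 + z3 + p) = 0" using T12 T13 by algebra
  then show S1: "z1 + z2 + z3 = - p" using assms(6) by (simp add: eq_neg_iff_add_eq_0)
  show "z1*z2 + z1*z3 + z2*z3 = r" using T12 S1 by algebra
qed

lemma chord_poly_two_roots:
  fixes e K z w w' :: "'a::idom"
  assumes "chord_poly e K z w = 0" "chord_poly e K z w' = 0" "w \<noteq> w'"
  shows "(w + w') * (1 - e*z^2) = 2*K*z" "w*w'*(1 - e*z^2) = z^2 - e"
proof -
  have "(w - w') * ((w + w') * (1 - e*z^2) - 2*K*z) = 0"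
    using assms(1,2) unfolding chord_poly_def by algebra
  then show sum: "(w + w') * (1 - e*z^2) = 2*K*z" using assms(3) by simp
  show "w*w'*(1 - e*z^2) = z^2 - e" using assms(1) sum unfolding chord_poly_def by algebra
qed

text \<open>Three pairwise "chords" force \<open>z\<^sub>1, z\<^sub>2, z\<^sub>3\<close> to be the roots of
  \<open>t\<^sup>3 + e z\<^sub>1z\<^sub>2z\<^sub>3 t\<^sup>2 - e t - z\<^sub>1z\<^sub>2z\<^sub>3\<close>.\<close>
lemma chord_poly_three_roots:
  fixes e K z1 z2 z3 :: "'a::idom"
  assumes F: "chord_poly e K z1 z2 = 0" "chord_poly e K z2 z3 = 0" "chord_poly e K z3 z1 = 0"
    and distinct: "z1 \<noteq> z2" "z1 \<noteq> z3" "z2 \<noteq> z3" and "z1 \<noteq> 0"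
  shows "z1 + z2 + z3 = - e*z1*z2*z3" "z1*z2 + z1*z3 + z2*z3 = - e" "2*K = e^2 - 1"
proof -
  have F': "chord_poly e K z2 z1 = 0" "chord_poly e K z3 z2 = 0" "chord_poly e K z1 z3 = 0"
    using F chord_poly_commute by metis+
  define q where "q = z1*z2*z3"
  note roots1 = chord_poly_two_roots[OF F(1) F'(3) distinct(3)]
  note roots2 = chord_poly_two_roots[OF F'(1) F(2) distinct(2)]
  note roots3 = chord_poly_two_roots[OF F(3) F'(2) distinct(1)]
  have cubic: "z1^3 + (e*q)*z1^2 + (-e)*z1 + (-q) = 0" "z2^3 + (e*q)*z2^2 + (-e)*z2 + (-q) = 0"
    "z3^3 + (e*q)*z3^2 + (-e)*z3 + (-q) = 0"
    using roots1(2) roots2(2) roots3(2) unfolding q_def by algebra+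
  note vieta = monic_cubic_vieta[OF cubic distinct]
  then show "z1 + z2 + z3 = - e*z1*z2*z3" "z1*z2 + z1*z3 + z2*z3 = - e"
    unfolding q_def by (simp_all add: mult.assoc)
  have "z1 * (2*K - e^2 + 1) = 0" using roots1(1) cubic(1) vieta(1) by algebra
  then have "2*K - e^2 + 1 = 0" using assms(7) by simp
  then show "2*K = e^2 - 1" by algebra
qed

lemma gap_ratio_vieta:
  fixes a b k X1 Y1 X2 Y2 X3 Y3 :: real
  defines "e \<equiv> k * (a^2 - b^2)"
    and "z1 \<equiv> Complex X1 Y1" and "z2 \<equiv> Complex X2 Y2" and "z3 \<equiv> Complex X3 Y3"
  assumes unit: "X1^2 + Y1^2 = 1" "X2^2 + Y2^2 = 1" "X3^2 + Y3^2 = 1"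
    and distinct: "(X1, Y1) \<noteq> (X2, Y2)" "(X2, Y2) \<noteq> (X3, Y3)" "(X3, Y3) \<noteq> (X1, Y1)"
    and ratio: "unit_gap X1 Y1 X2 Y2 = k * chord_weight a b X1 Y1 X2 Y2"
      "unit_gap X2 Y2 X3 Y3 = k * chord_weight a b X2 Y2 X3 Y3"
      "unit_gap X3 Y3 X1 Y1 = k * chord_weight a b X3 Y3 X1 Y1"
  shows "z1 + z2 + z3 = - of_real e * z1 * z2 * z3" "z1*z2 + z1*z3 + z2*z3 = - of_real e"
    and "2 * e * (a^2 + b^2) = (a^2 - b^2) * (3 - e^2)"
proof -
  define K where "K = 1 - k * (a^2 + b^2)"
  have F: "chord_poly (of_real e) (of_real K) z1 z2 = 0" "chord_poly (of_real e) (of_real K) z2 z3 = 0"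
    "chord_poly (of_real e) (of_real K) z3 z1 = 0"
    unfolding e_def K_def z1_def z2_def z3_def
    using chord_poly_Complex[OF unit(1,2) ratio(1)] chord_poly_Complex[OF unit(2,3) ratio(2)]
      chord_poly_Complex[OF unit(3,1) ratio(3)] by simp_all
  have "z1 \<noteq> z2" "z1 \<noteq> z3" "z2 \<noteq> z3" "z1 \<noteq> 0"
    using distinct unit(1) unfolding z1_def z2_def z3_def by (auto simp: complex_eq_iff)
  note roots = chord_poly_three_roots[OF F this]
  then show "z1 + z2 + z3 = - of_real e * z1 * z2 * z3" "z1*z2 + z1*z3 + z2*z3 = - of_real e"
    by simp_all
  have "complex_of_real (2 * K) = of_real (e^2 - 1)" using roots(3) by simp
  then have "2 * K = e^2 - 1" by (simp only: of_real_eq_iff)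
  then show "2 * e * (a^2 + b^2) = (a^2 - b^2) * (3 - e^2)"
    unfolding e_def K_def by algebra
qed

lemma tangent_line_scaled_iff:
  assumes "a \<noteq> 0" "b \<noteq> 0"
  shows "Z \<in> tangent_line a b (a*X, b*Y) \<longleftrightarrow> X * (fst Z / a) + Y * (snd Z / b) = 1"
proof -
  have "fst Z * (a*X) / a^2 + snd Z * (b*Y) / b^2 = X * (fst Z / a) + Y * (snd Z / b)"
    using assms by (simp add: power2_eq_square field_simps)
  then show ?thesis unfolding tangent_line_def by simp
qed

lemma outer_vertex_scaled:
  assumes ab: "a \<noteq> 0" "b \<noteq> 0" and det: "X*Y' - X'*Y \<noteq> 0"
  obtains \<xi> \<eta> where "outer_vertex a b (a*X, b*Y) (a*X', b*Y') = (a*\<xi>, b*\<eta>)"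
    "X*\<xi> + Y*\<eta> = 1" "X'*\<xi> + Y'*\<eta> = 1"
proof -
  define \<xi> \<eta> where "\<xi> = (Y' - Y) / (X*Y' - X'*Y)" "\<eta> = (X - X') / (X*Y' - X'*Y)"
  have on1: "X*\<xi> + Y*\<eta> = 1" and on2: "X'*\<xi> + Y'*\<eta> = 1"
    unfolding \<xi>_\<eta>_def using det by (simp_all add: field_simps) algebra+
  have "outer_vertex a b (a*X, b*Y) (a*X', b*Y') = (a*\<xi>, b*\<eta>)"
    unfolding outer_vertex_def
  proof (rule the_equality)
    show "(a*\<xi>, b*\<eta>) \<in> tangent_line a b (a*X, b*Y) \<and> (a*\<xi>, b*\<eta>) \<in> tangent_line a b (a*X', b*Y')"
      using on1 on2 ab by (simp add: tangent_line_scaled_iff)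
  next
    fix Z assume "Z \<in> tangent_line a b (a*X, b*Y) \<and> Z \<in> tangent_line a b (a*X', b*Y')"
    then have l1: "X * (fst Z / a) + Y * (snd Z / b) = 1" and l2: "X' * (fst Z / a) + Y' * (snd Z / b) = 1"
      using ab by (simp_all add: tangent_line_scaled_iff)
    have "(fst Z / a) * (X*Y' - X'*Y) = Y' - Y" "(snd Z / b) * (X*Y' - X'*Y) = X - X'"
      using l1 l2 by algebra+
    then have "fst Z / a = \<xi>" "snd Z / b = \<eta>" unfolding \<xi>_\<eta>_def using det by (simp_all add: field_simps)
    then show "Z = (a*\<xi>, b*\<eta>)" using ab by (cases Z) (simp add: field_simps)
  qed
  then show thesis using that on1 on2 by blast
qed

text \<open>Solvability forces the determinant of the three linear equations to vanish; on
  the unit circle its square is a quarter of the product of the squared side lengths.\<close>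
lemma no_common_point_of_three_tangents:
  fixes X1 Y1 X2 Y2 X3 Y3 u v :: real
  assumes "X1^2 + Y1^2 = 1" "X2^2 + Y2^2 = 1" "X3^2 + Y3^2 = 1"
    and "(X1, Y1) \<noteq> (X2, Y2)" "(X2, Y2) \<noteq> (X3, Y3)" "(X3, Y3) \<noteq> (X1, Y1)"
    and "X1*u + Y1*v = 1" "X2*u + Y2*v = 1" "X3*u + Y3*v = 1"
  shows False
proof -
  have "X1*(Y2 - Y3) - Y1*(X2 - X3) + (X2*Y3 - X3*Y2) = 0" using assms(7-9) by algebra
  moreover have "4 * (X1*(Y2 - Y3) - Y1*(X2 - X3) + (X2*Y3 - X3*Y2))^2
      = ((X1 - X2)^2 + (Y1 - Y2)^2) * ((X2 - X3)^2 + (Y2 - Y3)^2) * ((X3 - X1)^2 + (Y3 - Y1)^2)"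
    using assms(1-3) by algebra
  ultimately show False using assms(4-6) by (force simp: sum_power2_eq_zero_iff)
qed

text \<open>The squared cosine of the angle between the normals of the ellipse at
  \<open>(aX, bY)\<close> and \<open>(aX', bY')\<close>, which are parallel to \<open>(bX, aY)\<close> and \<open>(bX', aY')\<close>.\<close>
definition normal_cos_sq :: "real \<Rightarrow> real \<Rightarrow> real \<Rightarrow> real \<Rightarrow> real \<Rightarrow> real \<Rightarrow> real" where
  "normal_cos_sq a b X Y X' Y' =
     (b^2*X*X' + a^2*Y*Y')^2 / ((b^2*X^2 + a^2*Y^2) * (b^2*X'^2 + a^2*Y'^2))"

lemma cos_double_angle_normals:
  assumes "a \<noteq> 0" "b \<noteq> 0"
  shows "cos (2 * vec_angle (X/a, Y/b) (X'/a, Y'/b)) = 2 * normal_cos_sq a b X Y X' Y' - 1"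
proof -
  have scale: "(N / k)^2 / ((D / k) * (D' / k)) = N^2 / (D * D')" if "k \<noteq> 0" for N D D' k :: real
    using that by (simp add: power2_eq_square)
  have k: "a^2 * b^2 \<noteq> 0" using assms by simp
  have eqs: "X/a * (X'/a) + Y/b * (Y'/b) = (b^2*X*X' + a^2*Y*Y') / (a^2 * b^2)"
    "(X/a)^2 + (Y/b)^2 = (b^2*X^2 + a^2*Y^2) / (a^2 * b^2)"
    "(X'/a)^2 + (Y'/b)^2 = (b^2*X'^2 + a^2*Y'^2) / (a^2 * b^2)"
    using assms by (simp_all add: field_simps power2_eq_square)
  show ?thesis
    unfolding cos_double_vec_angle normal_cos_sq_def fst_conv snd_conv eqs scale[OF k] ..
qed

text \<open>The sides of the outer triangle are perpendicular to the normals at the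
  vertices of the billiard triangle, so the doubled angle at \<open>Q\<^sub>1\<close> is the doubled
  angle between the normals at \<open>P\<^sub>3\<close> and \<open>P\<^sub>2\<close>.\<close>
lemma cos_double_outer_angle:
  fixes a b X1 Y1 X2 Y2 X3 Y3 :: real
  assumes ab: "a > 0" "b > 0"
    and unit: "X1^2 + Y1^2 = 1" "X2^2 + Y2^2 = 1" "X3^2 + Y3^2 = 1"
    and distinct: "(X1, Y1) \<noteq> (X2, Y2)" "(X2, Y2) \<noteq> (X3, Y3)" "(X3, Y3) \<noteq> (X1, Y1)"
    and det: "X2*Y3 - X3*Y2 \<noteq> 0" "X3*Y1 - X1*Y3 \<noteq> 0" "X1*Y2 - X2*Y1 \<noteq> 0"
  defines "Q1 \<equiv> outer_vertex a b (a*X2, b*Y2) (a*X3, b*Y3)"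
    and "Q2 \<equiv> outer_vertex a b (a*X3, b*Y3) (a*X1, b*Y1)"
    and "Q3 \<equiv> outer_vertex a b (a*X1, b*Y1) (a*X2, b*Y2)"
  shows "cos (2 * vec_angle (vsub Q2 Q1) (vsub Q3 Q1)) = 2 * normal_cos_sq a b X3 Y3 X2 Y2 - 1"
proof -
  have nz: "a \<noteq> 0" "b \<noteq> 0" using ab by auto
  obtain \<xi>1 \<eta>1 where Q1: "Q1 = (a*\<xi>1, b*\<eta>1)" and t12: "X2*\<xi>1 + Y2*\<eta>1 = 1" and t13: "X3*\<xi>1 + Y3*\<eta>1 = 1"
    using outer_vertex_scaled[OF nz det(1)] unfolding Q1_def by metis
  obtain \<xi>2 \<eta>2 where Q2: "Q2 = (a*\<xi>2, b*\<eta>2)" and t23: "X3*\<xi>2 + Y3*\<eta>2 = 1" and t21: "X1*\<xi>2 + Y1*\<eta>2 = 1"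
    using outer_vertex_scaled[OF nz det(2)] unfolding Q2_def by metis
  obtain \<xi>3 \<eta>3 where Q3: "Q3 = (a*\<xi>3, b*\<eta>3)" and t31: "X1*\<xi>3 + Y1*\<eta>3 = 1" and t32: "X2*\<xi>3 + Y2*\<eta>3 = 1"
    using outer_vertex_scaled[OF nz det(3)] unfolding Q3_def by metis
  have "(\<xi>2, \<eta>2) \<noteq> (\<xi>1, \<eta>1)" "(\<xi>3, \<eta>3) \<noteq> (\<xi>1, \<eta>1)"
    using no_common_point_of_three_tangents[OF unit distinct _ t12 t13] t21 t31 by auto
  then have "vsub Q2 Q1 \<noteq> (0, 0)" "vsub Q3 Q1 \<noteq> (0, 0)"
    unfolding Q1 Q2 Q3 vsub_def using nz by auto
  moreover have "(X3/a, Y3/b) \<noteq> (0, 0)" "(X2/a, Y2/b) \<noteq> (0, 0)"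
    using unit(2,3) nz by auto
  moreover have "X3/a * fst (vsub Q2 Q1) + Y3/b * snd (vsub Q2 Q1) = 0"
    "X2/a * fst (vsub Q3 Q1) + Y2/b * snd (vsub Q3 Q1) = 0"
    unfolding Q1 Q2 Q3 vsub_def using nz t12 t13 t23 t32 by (simp_all add: field_simps) algebra+
  ultimately show ?thesis
    using cos_double_vec_angle_orthogonal[of "(X3/a, Y3/b)" "vsub Q2 Q1" "(X2/a, Y2/b)" "vsub Q3 Q1"]
      cos_double_angle_normals[OF nz] by simp
qed

lemma norm_Complex_unit: "X^2 + Y^2 = 1 \<Longrightarrow> cmod (Complex X Y) = 1"
  by (simp add: norm_complex_def)

lemma Complex_sq_eq_of_det_eq_0:
  fixes X Y X' Y' :: real
  assumes "X^2 + Y^2 = 1" "X'^2 + Y'^2 = 1" "X*Y' - X'*Y = 0"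
  shows "(Complex X Y)^2 = (Complex X' Y')^2"
proof -
  have "(of_real X)^2 + (of_real Y)^2 = (1::complex)" "(of_real X')^2 + (of_real Y')^2 = (1::complex)"
    "of_real X * of_real Y' - of_real X' * of_real Y = (0::complex)"
    using assms[THEN arg_cong[of _ _ complex_of_real]] by simp_all
  moreover have "\<i>^2 = (-1::complex)" by simp
  ultimately show ?thesis unfolding Complex_eq by algebra
qed

lemma vieta_not_antipodal:
  fixes z1 z2 z3 :: complex and e :: real
  assumes "z1 + z2 + z3 = - of_real e * z1 * z2 * z3" "z1 \<noteq> 0" "cmod z2 = 1" "e > 0" "e \<noteq> 1"
  shows "z3 \<noteq> - z2"
proof
  assume "z3 = - z2"
  then have "z1 * (of_real e * z2^2 - 1) = 0" using assms(1) by algebra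
  then have "of_real e * z2^2 = 1" using assms(2) by simp
  then have "cmod (of_real e * z2^2) = 1" by simp
  then have "\<bar>e\<bar> = 1" using assms(3) by (simp add: norm_mult norm_power)
  then show False using assms(4,5) by simp
qed

text \<open>No two vertices of the billiard triangle are antipodal, so any two of its
  tangents meet.\<close>
lemma tangents_not_parallel:
  fixes e X1 Y1 X2 Y2 X3 Y3 :: real
  assumes unit: "X1^2 + Y1^2 = 1" "X2^2 + Y2^2 = 1" "X3^2 + Y3^2 = 1"
    and distinct: "(X1, Y1) \<noteq> (X2, Y2)" "(X2, Y2) \<noteq> (X3, Y3)" "(X3, Y3) \<noteq> (X1, Y1)"
    and vieta: "Complex X1 Y1 + Complex X2 Y2 + Complex X3 Y3
      = - of_real e * Complex X1 Y1 * Complex X2 Y2 * Complex X3 Y3"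
    and "e > 0" "e \<noteq> 1"
  shows "X2*Y3 - X3*Y2 \<noteq> 0" "X3*Y1 - X1*Y3 \<noteq> 0" "X1*Y2 - X2*Y1 \<noteq> 0"
proof -
  have det_ne_0: "X*Y' - X'*Y \<noteq> 0"
    if "X^2 + Y^2 = 1" "X'^2 + Y'^2 = 1" "X''^2 + Y''^2 = 1" "(X, Y) \<noteq> (X', Y')"
      "Complex X'' Y'' + Complex X Y + Complex X' Y'
         = - of_real e * Complex X'' Y'' * Complex X Y * Complex X' Y'"
    for X Y X' Y' X'' Y'' :: real
  proof
    assume "X*Y' - X'*Y = 0"
    then have "(Complex X Y)^2 = (Complex X' Y')^2" by (rule Complex_sq_eq_of_det_eq_0[OF that(1,2)])
    then have "(Complex X Y - Complex X' Y') * (Complex X Y + Complex X' Y') = 0" by algebra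
    then have "Complex X Y + Complex X' Y' = 0" using that(4) by auto
    then have "Complex X' Y' = - Complex X Y" by (simp add: add_eq_0_iff)
    moreover have "Complex X'' Y'' \<noteq> 0" using that(3) by (auto simp: complex_eq_iff)
    ultimately show False
      using vieta_not_antipodal[OF that(5)] norm_Complex_unit[OF that(1)] assms(8,9) by blast
  qed
  show "X2*Y3 - X3*Y2 \<noteq> 0" using det_ne_0[OF unit(2,3,1) distinct(2)] vieta by (simp add: ac_simps)
  show "X3*Y1 - X1*Y3 \<noteq> 0" using det_ne_0[OF unit(3,1,2) distinct(3)] vieta by (simp add: ac_simps)
  show "X1*Y2 - X2*Y1 \<noteq> 0" using det_ne_0[OF unit(1,2,3) distinct(1)] vieta by (simp add: ac_simps)
qed

text \<open>For \<open>z = X + iY\<close>, \<open>w = X' + iY'\<close> on the unit circle,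
  \<open>normal_dot_poly (a\<^sup>2 + b\<^sup>2) (a\<^sup>2 - b\<^sup>2) z w = 4zw (b\<^sup>2XX' + a\<^sup>2YY')\<close>.\<close>
definition normal_dot_poly :: "complex \<Rightarrow> complex \<Rightarrow> complex \<Rightarrow> complex \<Rightarrow> complex" where
  "normal_dot_poly s C z w = s * (z^2 + w^2) - C * (z^2 * w^2 + 1)"

lemma normal_dot_poly_Complex:
  fixes a b X Y X' Y' :: real
  assumes "X^2 + Y^2 = 1" "X'^2 + Y'^2 = 1"
  shows "4 * Complex X Y * Complex X' Y' * of_real (b^2*X*X' + a^2*Y*Y')
     = normal_dot_poly (of_real (a^2 + b^2)) (of_real (a^2 - b^2)) (Complex X Y) (Complex X' Y')"
proof -
  have "(of_real X)^2 + (of_real Y)^2 = (1::complex)" "(of_real X')^2 + (of_real Y')^2 = (1::complex)"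
    using assms[THEN arg_cong[of _ _ complex_of_real]] by simp_all
  moreover have "\<i>^2 = (-1::complex)" by simp
  ultimately show ?thesis
    unfolding normal_dot_poly_def Complex_eq of_real_mult of_real_add of_real_diff of_real_power
    by algebra
qed

lemma normal_dot_poly_self_ne_0:
  fixes a b X Y :: real
  assumes "a > 0" "b > 0" "X^2 + Y^2 = 1"
  shows "normal_dot_poly (of_real (a^2 + b^2)) (of_real (a^2 - b^2)) (Complex X Y) (Complex X Y) \<noteq> 0"
proof -
  have "b^2*X*X + a^2*Y*Y \<noteq> 0" using scaled_normal_sq_pos assms by (metis less_irrefl)
  then have "complex_of_real (b^2*X*X + a^2*Y*Y) \<noteq> 0" by (metis of_real_eq_0_iff)
  moreover have "Complex X Y \<noteq> 0" using assms(3) by (auto simp: complex_eq_iff)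
  ultimately show ?thesis
    unfolding normal_dot_poly_Complex[OF assms(3,3), symmetric] by (metis mult_eq_0_iff zero_neq_numeral)
qed

lemma normal_cos_sq_Complex:
  fixes a b X Y X' Y' :: real
  assumes ab: "a > 0" "b > 0" and unit: "X^2 + Y^2 = 1" "X'^2 + Y'^2 = 1"
  defines "N \<equiv> normal_dot_poly (of_real (a^2 + b^2)) (of_real (a^2 - b^2))"
  shows "of_real (normal_cos_sq a b X Y X' Y')
     = (N (Complex X Y) (Complex X' Y'))^2 / (N (Complex X Y) (Complex X Y) * N (Complex X' Y') (Complex X' Y'))"
proof -
  have scale: "of_real (n^2 / (d * d')) = (4*z*w*of_real n)^2 / ((4*z*z*of_real d) * (4*w*w*of_real d'))"
    if "z \<noteq> 0" "w \<noteq> 0" "d \<noteq> 0" "d' \<noteq> 0" for z w :: complex and n d d' :: real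
    using that by (simp add: field_simps power2_eq_square)
  have z: "Complex X Y \<noteq> 0" "Complex X' Y' \<noteq> 0" using unit by (auto simp: complex_eq_iff)
  have d: "b^2*X*X + a^2*Y*Y \<noteq> 0" "b^2*X'*X' + a^2*Y'*Y' \<noteq> 0"
    using scaled_normal_sq_pos ab unit by (metis less_irrefl)+
  have cos_sq: "normal_cos_sq a b X Y X' Y'
      = (b^2*X*X' + a^2*Y*Y')^2 / ((b^2*X*X + a^2*Y*Y) * (b^2*X'*X' + a^2*Y'*Y'))"
    unfolding normal_cos_sq_def by (simp add: power2_eq_square mult.assoc)
  show ?thesis
    unfolding N_def cos_sq normal_dot_poly_Complex[OF unit(1,2), symmetric]
      normal_dot_poly_Complex[OF unit(1,1), symmetric] normal_dot_poly_Complex[OF unit(2,2), symmetric]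
    by (rule scale[OF z d])
qed

lemma normal_dot_poly_vieta_identity:
  fixes z1 z2 z3 e s C :: complex
  assumes "z1 + z2 + z3 = - e*z1*z2*z3" "z1*z2 + z1*z3 + z2*z3 = - e" "2*e*s = C*(3 - e^2)"
  defines "N \<equiv> normal_dot_poly s C"
  shows "4 * ((N z3 z2)^2 * N z1 z1 + (N z1 z3)^2 * N z2 z2 + (N z2 z1)^2 * N z3 z3)
     = (3 + e^2) * N z1 z1 * N z2 z2 * N z3 z3"
  using assms(1-3) unfolding N_def normal_dot_poly_def by algebra

lemma sum_normal_cos_sq:
  fixes a b e X1 Y1 X2 Y2 X3 Y3 :: real
  defines "z1 \<equiv> Complex X1 Y1" and "z2 \<equiv> Complex X2 Y2" and "z3 \<equiv> Complex X3 Y3"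
  assumes ab: "a > 0" "b > 0"
    and unit: "X1^2 + Y1^2 = 1" "X2^2 + Y2^2 = 1" "X3^2 + Y3^2 = 1"
    and vieta: "z1 + z2 + z3 = - of_real e * z1 * z2 * z3" "z1*z2 + z1*z3 + z2*z3 = - of_real e"
    and rel: "2 * e * (a^2 + b^2) = (a^2 - b^2) * (3 - e^2)"
  shows "normal_cos_sq a b X3 Y3 X2 Y2 + normal_cos_sq a b X1 Y1 X3 Y3 + normal_cos_sq a b X2 Y2 X1 Y1
    = (3 + e^2) / 4"
proof -
  define N where "N = normal_dot_poly (of_real (a^2 + b^2)) (of_real (a^2 - b^2))"
  have "2 * of_real e * of_real (a^2 + b^2) = of_real (a^2 - b^2) * (3 - (of_real e)^2 :: complex)"
    using arg_cong[OF rel, of complex_of_real] by simp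
  note identity = normal_dot_poly_vieta_identity[OF vieta this, folded N_def]
  have nz: "N z1 z1 \<noteq> 0" "N z2 z2 \<noteq> 0" "N z3 z3 \<noteq> 0"
    unfolding N_def z1_def z2_def z3_def using normal_dot_poly_self_ne_0[OF ab] unit by auto
  have "complex_of_real (normal_cos_sq a b X3 Y3 X2 Y2 + normal_cos_sq a b X1 Y1 X3 Y3
      + normal_cos_sq a b X2 Y2 X1 Y1)
      = (N z3 z2)^2 / (N z3 z3 * N z2 z2) + (N z1 z3)^2 / (N z1 z1 * N z3 z3)
      + (N z2 z1)^2 / (N z2 z2 * N z1 z1)"
    unfolding of_real_add N_def z1_def z2_def z3_def
    using normal_cos_sq_Complex[OF ab] unit by simp
  also have "\<dots> = 4 * ((N z3 z2)^2 * N z1 z1 + (N z1 z3)^2 * N z2 z2 + (N z2 z1)^2 * N z3 z3)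
      / (4 * N z1 z1 * N z2 z2 * N z3 z3)"
    using nz by (simp add: field_simps)
  also have "\<dots> = of_real ((3 + e^2) / 4)"
    unfolding identity using nz by (simp add: field_simps)
  finally show ?thesis by (simp only: of_real_eq_iff)
qed

lemma delta_const_eq:
  fixes a b e :: real
  assumes "a > b" "b > 0" "e > 0" and rel: "2 * e * (a^2 + b^2) = (a^2 - b^2) * (3 - e^2)"
  shows "delta_const a b = ((a^2 + b^2) + (a^2 - b^2) * e) / 2"
proof -
  have "((a^2 + b^2) + (a^2 - b^2) * e)^2
      = (a^2 + b^2)^2 + (a^2 - b^2) * (2 * e * (a^2 + b^2) + (a^2 - b^2) * e^2)"
    by algebra
  also have "\<dots> = 4 * (a^4 - a^2 * b^2 + b^4)" unfolding rel by algebra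
  finally have sq: "a^4 - a^2 * b^2 + b^4 = (((a^2 + b^2) + (a^2 - b^2) * e) / 2)^2"
    by (simp add: power_divide)
  have "a^2 - b^2 > 0" using assms(1,2) by (simp add: power_strict_mono)
  then have "(a^2 - b^2) * e > 0" using assms(3) by simp
  moreover have "a^2 + b^2 > 0" using assms(2) by (simp add: add_nonneg_pos)
  ultimately have "(a^2 + b^2) + (a^2 - b^2) * e > 0" by linarith
  then show ?thesis unfolding delta_const_def sq by simp
qed

lemma closed_forms_eq:
  fixes a b e :: real
  assumes ab: "a > b" "b > 0" and "e > 0" and rel: "2 * e * (a^2 + b^2) = (a^2 - b^2) * (3 - e^2)"
  shows "(a^2 + b^2) * (a^2 + b^2 - 2 * delta_const a b) / (a^2 - b^2)^2 = (e^2 - 3) / 2"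
    and "3 - joach_J a b * perim_L a b = (e^2 - 3) / 2"
proof -
  define s C where "s = a^2 + b^2" "C = a^2 - b^2"
  have C: "C > 0" unfolding s_C_def using ab by (simp add: power_strict_mono)
  have rel': "2 * e * s = C * (3 - e^2)" using rel unfolding s_C_def .
  have delta: "delta_const a b = (s + C * e) / 2"
    unfolding s_C_def by (rule delta_const_eq[OF assms])
  have "(a^2 + b^2) * (a^2 + b^2 - 2 * delta_const a b) / (a^2 - b^2)^2 = - (s * e) / C"
    unfolding delta s_C_def[symmetric] using C by (simp add: field_simps power2_eq_square)
  also have "\<dots> = (e^2 - 3) / 2" using rel' C by (simp add: field_simps)
  finally show "(a^2 + b^2) * (a^2 + b^2 - 2 * delta_const a b) / (a^2 - b^2)^2 = (e^2 - 3) / 2" .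
  have "2 * delta_const a b - a^2 - b^2 = C * e" unfolding delta s_C_def by (simp add: field_simps)
  then have "joach_J a b * joach_J a b = sqrt (C * e) * sqrt (C * e) / (C * C)"
    unfolding joach_J_def s_C_def by simp
  also have "\<dots> = e / C" using C \<open>e > 0\<close> by simp
  finally have JJ: "C * (joach_J a b * joach_J a b) = e" using C by (simp add: field_simps)
  have "perim_L a b = (3 * s + C * e) * joach_J a b"
    unfolding perim_L_def delta by (simp add: s_C_def field_simps)
  then have "C * (2 * (joach_J a b * perim_L a b)) = 2 * (3 * s + C * e) * (C * (joach_J a b * joach_J a b))"
    by (simp add: algebra_simps)
  also have "\<dots> = C * (9 - e^2)" unfolding JJ using rel' by algebra
  finally have "C * (2 * (joach_J a b * perim_L a b)) = C * (9 - e^2)" .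
  then show "3 - joach_J a b * perim_L a b = (e^2 - 3) / 2" using C by simp
qed

theorem mainTheorem10:
  fixes a b :: real and P1 P2 P3 :: point
  assumes "a > b" and "b > 0"
    and "three_periodic a b P1 P2 P3"
  shows "(let Q1 = outer_vertex a b P2 P3; Q2 = outer_vertex a b P3 P1;
              Q3 = outer_vertex a b P1 P2;
              S = cos (2 * vec_angle (vsub Q2 Q1) (vsub Q3 Q1))
                + cos (2 * vec_angle (vsub Q3 Q2) (vsub Q1 Q2))
                + cos (2 * vec_angle (vsub Q1 Q3) (vsub Q2 Q3))
          in S = (a^2 + b^2) * (a^2 + b^2 - 2 * delta_const a b) / (a^2 - b^2)^2
           \<and> S = 3 - joach_J a b * perim_L a b)"
proof -
  have ab: "a > 0" "b > 0" using assms(1,2) by auto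
  obtain X1 Y1 X2 Y2 X3 Y3 k where P: "P1 = (a*X1, b*Y1)" "P2 = (a*X2, b*Y2)" "P3 = (a*X3, b*Y3)"
    and unit: "X1^2 + Y1^2 = 1" "X2^2 + Y2^2 = 1" "X3^2 + Y3^2 = 1"
    and distinct: "(X1, Y1) \<noteq> (X2, Y2)" "(X2, Y2) \<noteq> (X3, Y3)" "(X3, Y3) \<noteq> (X1, Y1)"
    and "k > 0" and ratio: "unit_gap X1 Y1 X2 Y2 = k * chord_weight a b X1 Y1 X2 Y2"
      "unit_gap X2 Y2 X3 Y3 = k * chord_weight a b X2 Y2 X3 Y3"
      "unit_gap X3 Y3 X1 Y1 = k * chord_weight a b X3 Y3 X1 Y1"
    using three_periodic_common_ratio[OF assms] by blast
  define e where "e = k * (a^2 - b^2)"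
  have "e > 0" unfolding e_def using \<open>k > 0\<close> assms(1,2) by (simp add: power_strict_mono)
  note vieta = gap_ratio_vieta[OF unit distinct ratio, folded e_def]
  have "e \<noteq> 1" using vieta(3) assms(2) by auto
  note det = tangents_not_parallel[OF unit distinct vieta(1) \<open>e > 0\<close> this]
  have angles: "cos (2 * vec_angle (vsub Q2 Q1) (vsub Q3 Q1))
      + cos (2 * vec_angle (vsub Q3 Q2) (vsub Q1 Q2)) + cos (2 * vec_angle (vsub Q1 Q3) (vsub Q2 Q3))
      = (e^2 - 3) / 2"
    if "Q1 = outer_vertex a b P2 P3" "Q2 = outer_vertex a b P3 P1" "Q3 = outer_vertex a b P1 P2"
    for Q1 Q2 Q3
    using cos_double_outer_angle[OF ab unit distinct det]
      cos_double_outer_angle[OF ab unit(2,3,1) distinct(2,3,1) det(2,3,1)]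
      cos_double_outer_angle[OF ab unit(3,1,2) distinct(3,1,2) det(3,1,2)]
      sum_normal_cos_sq[OF ab unit vieta]
    unfolding that P by simp
  show ?thesis
    unfolding Let_def angles[OF refl refl refl] closed_forms_eq[OF assms(1,2) \<open>e > 0\<close> vieta(3)]
    by simp
qed

end
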